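(* Let $Q$ be an absolutely continuous stochastic algorithm with Hamiltonian $H$. Assume that for every $h\in\mathcal{H}$ there is $\rho(h)>0$ such that $\mathbb{E}\left[e^{\lambda(h(X)-\mathbb{E}[h(X')])}\right]\le e^{\lambda^2\rho(h)^2/2}$ for all $\lambda\in\mathbb{R}$, and that there is $\sigma>0$ such that for all $\lambda\in\mathbb{R}$, $k\in[n]$, $h\in\mathcal{H}$ and $\mathbf{x}\in\mathcal{X}^n$, $$\mathbb{E}_{X\sim\mu}\left[e^{\lambda\left(H(h,S^k_X\mathbf{x})-\mathbb{E}_{X'\sim\mu}[H(h,S^k_{X'}\mathbf{x})]\right)}\right]\le e^{\lambda^2\sigma^2/2}.$$ Then for $\delta>0$, with probability at least $1-\delta$ as $\mathbf{X}\sim\mu^n$ and $h\sim Q_{\mathbf{X}}$, $$\Delta(h,\mathbf{X})\le \rho(h)\left(\sqrt{32}\,\sigma+\sqrt{\frac{4\ln(1/\delta)}{n}}\right).$$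
   Context: $\mathcal{X}$ is a measurable space with probability measure $\mu$, $\mathbf{X}=(X_1,\dots,X_n)\sim\mu^n$, $X,X'\sim\mu$ independent. $\mathcal{H}$ is a measurable space of measurable functions $h:\mathcal{X}\to[0,\infty)$ with nonnegative a-priori measure $\pi$. A stochastic algorithm $Q:\mathbf{x}\mapsto Q_{\mathbf{x}}$ (probability measures on $\mathcal{H}$) is absolutely continuous if each $Q_{\mathbf{x}}$ and $\pi$ are mutually absolutely continuous. A measurable $H:\mathcal{H}\times\mathcal{X}^n\to\mathbb{R}$ is a Hamiltonian for $Q$ if $dQ_{\mathbf{x}}(h)=e^{H(h,\mathbf{x})}d\pi(h)/Z(\mathbf{x})$ with $Z(\mathbf{x})=\int_{\mathcal{H}}e^{H(h,\mathbf{x})}d\pi(h)$ finite and positive. $[n]=\{1,\dots,n\}$; $S^k_y\mathbf{x}$ replaces the $k$-th coordinate of $\mathbf{x}$ by $y$. Generalization gap: $\Delta(h,\mathbf{x})=\mathbb{E}[h(X)]-\frac1n\sum_{i=1}^n h(x_i)$. Probability "as $\mathbf{X}\sim\mu^n$ and $h\sim Q_{\mathbf{X}}$" is w.r.t. the joint law. All functions are assumed to have finite exponential moments of all orders (and $\int_{\mathcal{H}}e^{\mathbb{E}[H(h,\mathbf{X})]}d\pi(h)$ is finite and positive). *)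

theory Defs
  imports "HOL-Probability.Probability"
begin

text \<open>Sample space of n-samples: \<mu>^n, indices [n] rendered as {0..<n}.\<close>
abbreviation sample_space :: "nat \<Rightarrow> 'a measure \<Rightarrow> (nat \<Rightarrow> 'a) measure" where
  "sample_space n M \<equiv> PiM {0..<n} (\<lambda>_. M)"

definition gen_gap :: "'a measure \<Rightarrow> nat \<Rightarrow> ('a \<Rightarrow> real) \<Rightarrow> (nat \<Rightarrow> 'a) \<Rightarrow> real" where
  "gen_gap M n h x = (\<integral>y. h y \<partial>M) - (\<Sum>i<n. h (x i)) / real n"

definition partition_fun :: "('b measure) \<Rightarrow> ('b \<Rightarrow> 'c \<Rightarrow> real) \<Rightarrow> 'c \<Rightarrow> real" where
  "partition_fun Pr H x = (\<integral>h. exp (H h x) \<partial>Pr)"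

definition abs_cont_alg :: "'b measure \<Rightarrow> 'c measure \<Rightarrow> ('c \<Rightarrow> 'b measure) \<Rightarrow> bool" where
  "abs_cont_alg Pr XS Q \<longleftrightarrow> (\<forall>x\<in>space XS. prob_space (Q x) \<and> sets (Q x) = sets Pr \<and>
       absolutely_continuous Pr (Q x) \<and> absolutely_continuous (Q x) Pr)"

definition is_hamiltonian :: "'b measure \<Rightarrow> 'c measure \<Rightarrow> ('c \<Rightarrow> 'b measure) \<Rightarrow> ('b \<Rightarrow> 'c \<Rightarrow> real) \<Rightarrow> bool" where
  "is_hamiltonian Pr XS Q H \<longleftrightarrow>
     (\<lambda>(h, x). H h x) \<in> borel_measurable (Pr \<Otimes>\<^sub>M XS) \<and>
     (\<forall>x\<in>space XS. integrable Pr (\<lambda>h. exp (H h x)) \<and> partition_fun Pr H x > 0 \<and>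
        Q x = density Pr (\<lambda>h. ennreal (exp (H h x) / partition_fun Pr H x)))"

end

theory Submission
  imports Defs
begin

text \<open>Relative to the sample-independent prior \<open>\<pi>\<close> with density proportional to
  \<open>exp \<bbbE>[H(h, X)]\<close>, the posterior \<open>Q\<^sub>x\<close> is the exponential tilt of \<open>\<pi>\<close> by the centred
  Hamiltonian \<open>G = H - \<bbbE>H\<close>. Jensen's inequality \<open>1 / \<integral>e\<^sup>G d\<pi> \<le> \<integral>e\<^sup>-\<^sup>G d\<pi>\<close> bounds the posterior
  mass of the bad set \<open>B\<close> by \<open>\<integral>\<^sub>Be\<^sup>G d\<pi> \<cdot> \<integral>e\<^sup>-\<^sup>G d\<pi>\<close>, and AM-GM splits this into
  \<open>\<pi>(B)/(2\<eta>) + \<eta>/4 (\<integral>e\<^sup>4\<^sup>G d\<pi> + \<integral>e\<^sup>-\<^sup>4\<^sup>G d\<pi>)\<close>. After averaging over the sample and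
  exchanging the integrals, \<open>\<pi>(B)\<close> is controlled by the Chernoff bound for the sub-Gaussian
  hypotheses, and the exponential moments of \<open>\<pm>4G\<close> by \<open>exp (8n\<sigma>\<^sup>2)\<close> through a McDiarmid-type
  tensorisation of the coordinatewise sub-Gaussian condition on \<open>H\<close>. Taking
  \<open>\<eta> = exp (-nt\<^sup>2/4)\<close> makes the total failure probability at most \<open>\<delta>\<close>.\<close>

lemma exp_integral_le_nn_integral_exp:
  fixes g :: "'b \<Rightarrow> real"
  assumes N: "prob_space N" and g: "integrable N g"
  shows "ennreal (exp (\<integral>x. g x \<partial>N)) \<le> (\<integral>\<^sup>+x. ennreal (exp (g x)) \<partial>N)"
proof (cases "integrable N (\<lambda>x. exp (g x))")
  case True
  have "exp (\<integral>x. g x \<partial>N) \<le> (\<integral>x. exp (g x) \<partial>N)"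
    using prob_space.jensens_inequality[OF N g, of UNIV 0 0 exp] True exp_convex by auto
  then have "ennreal (exp (\<integral>x. g x \<partial>N)) \<le> ennreal (\<integral>x. exp (g x) \<partial>N)"
    by (rule ennreal_leI)
  also have "\<dots> = (\<integral>\<^sup>+x. ennreal (exp (g x)) \<partial>N)"
    using True by (intro nn_integral_eq_integral[symmetric]) auto
  finally show ?thesis .
next
  case False
  have "(\<integral>\<^sup>+x. ennreal (exp (g x)) \<partial>N) = \<infinity>"
    using False g by (intro ccontr[of "_ = \<infinity>"]) (auto intro!: integrableI_bounded simp: less_top)
  then show ?thesis by simp
qed

lemma one_div_integral_le_nn_integral_one_div:
  fixes f :: "'b \<Rightarrow> real"
  assumes N: "prob_space N" and f: "integrable N f" and pos: "\<forall>x\<in>space N. f x > 0"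
  shows "ennreal (1 / (\<integral>x. f x \<partial>N)) \<le> (\<integral>\<^sup>+x. ennreal (1 / f x) \<partial>N)"
proof (cases "integrable N (\<lambda>x. 1 / f x)")
  case True
  interpret N: prob_space N by fact
  define Y where "Y = (\<integral>x. f x \<partial>N)"
  have "Y \<noteq> 0"
  proof
    assume "Y = 0"
    then have "AE x in N. f x = 0"
      using f pos by (subst (asm) Y_def, subst (asm) integral_nonneg_eq_0_iff_AE) (auto intro!: AE_I2 less_imp_le)
    then have "AE x in N. False"
      by (rule AE_mp) (use pos in \<open>auto intro!: AE_I2\<close>)
    then show False by (simp add: N.AE_False)
  qed
  moreover have "Y \<ge> 0"
    unfolding Y_def using pos by (intro integral_nonneg_AE AE_I2) (auto simp: less_imp_le)
  ultimately have "Y > 0" by simp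
  \<comment> \<open>The tangent line of \<open>1/v\<close> at \<open>v = Y\<close> lies below the convex function \<open>1/v\<close>.\<close>
  have tangent: "2 / Y - v / Y^2 \<le> 1 / v" if "v > 0" for v
  proof -
    have "1 / v - (2 / Y - v / Y^2) = (v - Y)^2 / (v * Y^2)"
      using that \<open>Y > 0\<close> by (simp add: field_simps power2_eq_square)
    also have "\<dots> \<ge> 0" using that by simp
    finally show ?thesis by simp
  qed
  have "1 / Y = (\<integral>x. (2 / Y - f x / Y^2) \<partial>N)"
    using f \<open>Y > 0\<close> by (simp add: N.prob_space Y_def[symmetric] field_simps power2_eq_square)
  also have "\<dots> \<le> (\<integral>x. 1 / f x \<partial>N)"
    using f True pos tangent by (intro integral_mono) auto
  finally have "ennreal (1 / Y) \<le> ennreal (\<integral>x. 1 / f x \<partial>N)"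
    by (rule ennreal_leI)
  also have "\<dots> = (\<integral>\<^sup>+x. ennreal (1 / f x) \<partial>N)"
    using True pos by (intro nn_integral_eq_integral[symmetric]) (auto intro!: AE_I2 less_imp_le)
  finally show ?thesis by (simp add: Y_def)
next
  case False
  have "(\<integral>\<^sup>+x. ennreal (1 / f x) \<partial>N) = \<infinity>"
  proof (rule ccontr)
    assume "(\<integral>\<^sup>+x. ennreal (1 / f x) \<partial>N) \<noteq> \<infinity>"
    moreover have "(\<integral>\<^sup>+x. ennreal (norm (1 / f x)) \<partial>N) = (\<integral>\<^sup>+x. ennreal (1 / f x) \<partial>N)"
      using pos by (intro nn_integral_cong) auto
    ultimately have "integrable N (\<lambda>x. 1 / f x)"
      using f by (intro integrableI_bounded) (auto simp: less_top)
    with False show False by simp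
  qed
  then show ?thesis by simp
qed

definition subgaussian :: "'a measure \<Rightarrow> ('a \<Rightarrow> real) \<Rightarrow> real \<Rightarrow> bool"
  where "subgaussian M f s \<longleftrightarrow> integrable M f \<and>
    (\<forall>l. (\<integral>\<^sup>+y. ennreal (exp (l * (f y - (\<integral>y'. f y' \<partial>M)))) \<partial>M) \<le> ennreal (exp (l\<^sup>2 * s\<^sup>2 / 2)))"

lemma subgaussian_nn_integral_abs_le:
  assumes "subgaussian M f s"
  shows "(\<integral>\<^sup>+y. ennreal \<bar>f y - (\<integral>y'. f y' \<partial>M)\<bar> \<partial>M) \<le> ennreal (2 * exp (s\<^sup>2 / 2))"
proof -
  define D where "D y = f y - (\<integral>y'. f y' \<partial>M)" for y
  have D_meas: "D \<in> borel_measurable M" using assms by (auto simp: subgaussian_def D_def[abs_def])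
  have "\<bar>d\<bar> \<le> exp d + exp (- d)" for d :: real
    using exp_ge_add_one_self[of d] exp_ge_add_one_self[of "- d"] exp_gt_zero[of d] exp_gt_zero[of "- d"]
    by linarith
  then have "(\<integral>\<^sup>+y. ennreal \<bar>D y\<bar> \<partial>M) \<le> (\<integral>\<^sup>+y. ennreal (exp (D y)) + ennreal (exp (- D y)) \<partial>M)"
    by (intro nn_integral_mono) (simp add: ennreal_plus[symmetric] del: ennreal_plus)
  also have "\<dots> = (\<integral>\<^sup>+y. ennreal (exp (D y)) \<partial>M) + (\<integral>\<^sup>+y. ennreal (exp (- D y)) \<partial>M)"
    using D_meas by (subst nn_integral_add) auto
  also have "\<dots> \<le> ennreal (exp (s\<^sup>2 / 2)) + ennreal (exp (s\<^sup>2 / 2))"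
  proof -
    have mgf: "(\<integral>\<^sup>+y. ennreal (exp (l * D y)) \<partial>M) \<le> ennreal (exp (l\<^sup>2 * s\<^sup>2 / 2))" for l
      using assms by (simp add: subgaussian_def D_def)
    show ?thesis using mgf[of 1] mgf[of "- 1"] by (intro add_mono) simp_all
  qed
  also have "\<dots> = ennreal (2 * exp (s\<^sup>2 / 2))"
    by (simp add: ennreal_plus[symmetric] del: ennreal_plus)
  finally show ?thesis by (simp add: D_def)
qed

lemma integrable_section_mean:
  fixes \<phi> :: "'a \<Rightarrow> 'a \<Rightarrow> real"
  assumes M: "prob_space M"
    and \<phi>: "(\<lambda>(z, y). \<phi> z y) \<in> borel_measurable (M \<Otimes>\<^sub>M M)"
    and int_fst: "\<forall>y\<in>space M. integrable M (\<lambda>z. \<phi> z y)"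
    and bound: "\<forall>z\<in>space M. (\<integral>\<^sup>+y. ennreal \<bar>\<phi> z y - (\<integral>y'. \<phi> z y' \<partial>M)\<bar> \<partial>M) \<le> ennreal C"
  shows "integrable M (\<lambda>z. \<integral>y. \<phi> z y \<partial>M)"
proof -
  interpret M: prob_space M by fact
  interpret P: pair_sigma_finite M M by unfold_locales
  define m where "m z = (\<integral>y. \<phi> z y \<partial>M)" for z
  have m_meas[measurable]: "m \<in> borel_measurable M"
    unfolding m_def by (rule M.borel_measurable_lebesgue_integral) (use \<phi> in simp)
  have "(\<integral>\<^sup>+y. (\<integral>\<^sup>+z. ennreal \<bar>\<phi> z y - m z\<bar> \<partial>M) \<partial>M) = (\<integral>\<^sup>+z. (\<integral>\<^sup>+y. ennreal \<bar>\<phi> z y - m z\<bar> \<partial>M) \<partial>M)"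
    by (rule P.Fubini') (use \<phi> in measurable)
  also have "\<dots> \<le> (\<integral>\<^sup>+z. ennreal C \<partial>M)"
    using bound by (intro nn_integral_mono) (auto simp: m_def)
  finally have finite: "(\<integral>\<^sup>+y. (\<integral>\<^sup>+z. ennreal \<bar>\<phi> z y - m z\<bar> \<partial>M) \<partial>M) < \<infinity>"
    by (simp add: M.emeasure_space_1 le_less_trans)
  have "\<exists>y0\<in>space M. (\<integral>\<^sup>+z. ennreal \<bar>\<phi> z y0 - m z\<bar> \<partial>M) < \<infinity>"
  proof (rule ccontr)
    assume "\<not> ?thesis"
    then have "(\<integral>\<^sup>+y. (\<integral>\<^sup>+z. ennreal \<bar>\<phi> z y - m z\<bar> \<partial>M) \<partial>M) = (\<integral>\<^sup>+y. \<infinity> \<partial>M)"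
      by (intro nn_integral_cong) (simp add: less_top[symmetric])
    with finite show False by (simp add: M.emeasure_space_1)
  qed
  then obtain y0 where y0: "y0 \<in> space M" "(\<integral>\<^sup>+z. ennreal \<bar>\<phi> z y0 - m z\<bar> \<partial>M) < \<infinity>"
    by blast
  have centered_int: "integrable M (\<lambda>z. \<phi> z y0 - m z)"
  proof (rule integrableI_bounded)
    show "(\<lambda>z. \<phi> z y0 - m z) \<in> borel_measurable M" using \<phi> y0(1) by measurable
  qed (use y0(2) in simp)
  have "integrable M (\<lambda>z. \<phi> z y0 - (\<phi> z y0 - m z))"
    by (rule Bochner_Integration.integrable_diff[OF bspec[OF int_fst y0(1)] centered_int])
  then show ?thesis by (simp add: m_def)
qed

text \<open>The \<open>L\<^sup>1\<close>-norm of \<open>\<phi>\<close> is at most that of the section means plus the uniform bound on the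
  centred sections.\<close>
lemma integrable_pair_of_subgaussian_sections:
  fixes \<phi> :: "'a \<Rightarrow> 'a \<Rightarrow> real"
  assumes M: "prob_space M"
    and \<phi>: "(\<lambda>(z, y). \<phi> z y) \<in> borel_measurable (M \<Otimes>\<^sub>M M)"
    and int_fst: "\<forall>y\<in>space M. integrable M (\<lambda>z. \<phi> z y)"
    and sub: "\<forall>z\<in>space M. subgaussian M (\<lambda>y. \<phi> z y) s"
  shows "integrable (M \<Otimes>\<^sub>M M) (\<lambda>(z, y). \<phi> z y)"
proof -
  interpret M: prob_space M by fact
  define m where "m z = (\<integral>y. \<phi> z y \<partial>M)" for z
  define C where "C = 2 * exp (s\<^sup>2 / 2)"
  have bound: "\<forall>z\<in>space M. (\<integral>\<^sup>+y. ennreal \<bar>\<phi> z y - m z\<bar> \<partial>M) \<le> ennreal C"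
    using sub subgaussian_nn_integral_abs_le unfolding m_def C_def by blast
  then have m_int: "integrable M m"
    unfolding m_def by (intro integrable_section_mean[OF M \<phi> int_fst]) simp
  have "(\<integral>\<^sup>+p. ennreal (norm ((\<lambda>(z, y). \<phi> z y) p)) \<partial>(M \<Otimes>\<^sub>M M))
      = (\<integral>\<^sup>+p. (\<lambda>(z, y). ennreal \<bar>\<phi> z y\<bar>) p \<partial>(M \<Otimes>\<^sub>M M))"
    by (rule nn_integral_cong) (auto split: prod.split)
  also have "\<dots> = (\<integral>\<^sup>+z. (\<integral>\<^sup>+y. ennreal \<bar>\<phi> z y\<bar> \<partial>M) \<partial>M)"
    using M.nn_integral_fst[of "\<lambda>(z, y). ennreal \<bar>\<phi> z y\<bar>"] \<phi> by (simp add: measurable_compose_rev)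
  also have "\<dots> \<le> (\<integral>\<^sup>+z. (\<integral>\<^sup>+y. ennreal \<bar>\<phi> z y - m z\<bar> + ennreal \<bar>m z\<bar> \<partial>M) \<partial>M)"
    by (intro nn_integral_mono) (auto simp: ennreal_plus[symmetric] simp del: ennreal_plus)
  also have "\<dots> = (\<integral>\<^sup>+z. (\<integral>\<^sup>+y. ennreal \<bar>\<phi> z y - m z\<bar> \<partial>M) + ennreal \<bar>m z\<bar> \<partial>M)"
    using sub by (intro nn_integral_cong, subst nn_integral_add) (auto simp: M.emeasure_space_1 subgaussian_def)
  also have "\<dots> \<le> (\<integral>\<^sup>+z. ennreal C + ennreal \<bar>m z\<bar> \<partial>M)"
    using bound by (intro nn_integral_mono add_mono) auto
  also have "\<dots> = ennreal C + (\<integral>\<^sup>+z. ennreal \<bar>m z\<bar> \<partial>M)"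
    using m_int by (subst nn_integral_add) (auto simp: M.emeasure_space_1)
  also have "\<dots> < \<infinity>"
    using m_int by (simp add: integrable_iff_bounded)
  finally show ?thesis
    by (intro integrableI_bounded) (use \<phi> in auto)
qed

text \<open>Jensen's inequality in \<open>z\<close>, followed by Fubini.\<close>
lemma nn_integral_exp_centered_average_le:
  fixes \<phi> :: "'a \<Rightarrow> 'a \<Rightarrow> real"
  assumes M: "prob_space M"
    and \<phi>: "integrable (M \<Otimes>\<^sub>M M) (\<lambda>(z, y). \<phi> z y)"
    and int_fst: "\<forall>y\<in>space M. integrable M (\<lambda>z. \<phi> z y)"
    and bound: "\<forall>z\<in>space M. (\<integral>\<^sup>+y. ennreal (exp (l * (\<phi> z y - (\<integral>y'. \<phi> z y' \<partial>M)))) \<partial>M) \<le> ennreal B"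
  shows "(\<integral>\<^sup>+y. ennreal (exp (l * ((\<integral>z. \<phi> z y \<partial>M) - (\<integral>y'. (\<integral>z. \<phi> z y' \<partial>M) \<partial>M)))) \<partial>M)
    \<le> ennreal B"
proof -
  interpret M: prob_space M by fact
  interpret P: pair_sigma_finite M M by unfold_locales
  define m where "m z = (\<integral>y. \<phi> z y \<partial>M)" for z
  have m_int: "integrable M m"
    using P.integrable_fst'[OF \<phi>] by (simp add: m_def[abs_def])
  have \<phi>_meas: "(\<lambda>(z, y). \<phi> z y) \<in> borel_measurable (M \<Otimes>\<^sub>M M)" and [measurable]: "m \<in> borel_measurable M"
    using \<phi> m_int by auto
  have "(\<integral>y'. (\<integral>z. \<phi> z y' \<partial>M) \<partial>M) = (\<integral>z. m z \<partial>M)"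
    using P.Fubini_integral[OF \<phi>] by (simp add: m_def)
  then have centered: "(\<integral>z. \<phi> z y \<partial>M) - (\<integral>y'. (\<integral>z. \<phi> z y' \<partial>M) \<partial>M) = (\<integral>z. \<phi> z y - m z \<partial>M)"
    if "y \<in> space M" for y
    using int_fst that m_int by simp
  have "(\<integral>\<^sup>+y. ennreal (exp (l * ((\<integral>z. \<phi> z y \<partial>M) - (\<integral>y'. (\<integral>z. \<phi> z y' \<partial>M) \<partial>M)))) \<partial>M)
      = (\<integral>\<^sup>+y. ennreal (exp (\<integral>z. l * (\<phi> z y - m z) \<partial>M)) \<partial>M)"
    by (intro nn_integral_cong) (simp add: centered)
  also have "\<dots> \<le> (\<integral>\<^sup>+y. (\<integral>\<^sup>+z. ennreal (exp (l * (\<phi> z y - m z))) \<partial>M) \<partial>M)"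
    using int_fst m_int by (intro nn_integral_mono exp_integral_le_nn_integral_exp[OF M]) auto
  also have "\<dots> = (\<integral>\<^sup>+z. (\<integral>\<^sup>+y. ennreal (exp (l * (\<phi> z y - m z))) \<partial>M) \<partial>M)"
    by (rule P.Fubini') (use \<phi>_meas in measurable)
  also have "\<dots> \<le> (\<integral>\<^sup>+z. ennreal B \<partial>M)"
    using bound by (intro nn_integral_mono) (simp add: m_def)
  finally show ?thesis by (simp add: M.emeasure_space_1)
qed

definition coordinatewise_subgaussian :: "'a measure \<Rightarrow> nat \<Rightarrow> ((nat \<Rightarrow> 'a) \<Rightarrow> real) \<Rightarrow> real \<Rightarrow> bool"
  where "coordinatewise_subgaussian M m F s \<longleftrightarrow>
    (\<forall>x\<in>space (PiM {0..<m} (\<lambda>_. M)). \<forall>k<m. subgaussian M (\<lambda>y. F (x(k := y))) s)"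

lemma product_prob_space_const: "prob_space M \<Longrightarrow> product_prob_space (\<lambda>_. M)"
  by (simp add: product_prob_space_def product_prob_space_axioms_def product_sigma_finite_def
      prob_space_imp_sigma_finite)

lemma fun_upd_in_space_PiM:
  "x \<in> space (PiM I (\<lambda>_. M)) \<Longrightarrow> y \<in> space M \<Longrightarrow> k \<in> J \<Longrightarrow> I \<subseteq> J \<Longrightarrow> J \<subseteq> insert k I \<Longrightarrow>
    x(k := y) \<in> space (PiM J (\<lambda>_. M))"
  by (auto simp: space_PiM PiE_iff extensional_def)

lemma measurable_fun_upd_fun_upd_PiM:
  assumes x: "x \<in> space (PiM I (\<lambda>_. M))" and k: "k \<in> I"
    and F: "F \<in> borel_measurable (PiM (insert m I) (\<lambda>_. M))"
  shows "(\<lambda>(z, y). F ((x(m := z))(k := y))) \<in> borel_measurable (M \<Otimes>\<^sub>M M)"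
proof -
  have upd_m: "(\<lambda>w. x(m := fst w)) \<in> measurable (M \<Otimes>\<^sub>M M) (PiM (insert m I) (\<lambda>_. M))"
    by (rule measurable_fun_upd[where J=I]) (use x in auto)
  have "(\<lambda>w. (x(m := fst w))(k := snd w)) \<in> measurable (M \<Otimes>\<^sub>M M) (PiM (insert m I) (\<lambda>_. M))"
    by (rule measurable_fun_upd[where J="insert m I"]) (use upd_m k in auto)
  from measurable_compose[OF this F] show ?thesis by (simp add: case_prod_beta')
qed

text \<open>The new coordinate sections are averages, over the integrated coordinate, of sub-Gaussian
  sections.\<close>
lemma coordinatewise_subgaussian_marginal:
  assumes M: "prob_space M"
    and F: "F \<in> borel_measurable (PiM {0..<Suc m} (\<lambda>_. M))"
    and sub: "coordinatewise_subgaussian M (Suc m) F s"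
  shows "coordinatewise_subgaussian M m (\<lambda>x. \<integral>z. F (x(m := z)) \<partial>M) s"
  unfolding coordinatewise_subgaussian_def
proof (intro ballI allI impI)
  interpret M: prob_space M by fact
  fix x k assume x: "x \<in> space (PiM {0..<m} (\<lambda>_. M))" and k: "k < m"
  define \<phi> where "\<phi> z y = F ((x(m := z))(k := y))" for z y
  have swap: "(x(k := y))(m := z) = (x(m := z))(k := y)" for y z
    using k by (simp add: fun_upd_twist)
  have sub_snd: "\<forall>z\<in>space M. subgaussian M (\<lambda>y. \<phi> z y) s"
  proof
    fix z assume "z \<in> space M"
    with x have "x(m := z) \<in> space (PiM {0..<Suc m} (\<lambda>_. M))"
      by (rule fun_upd_in_space_PiM) auto
    with sub k show "subgaussian M (\<lambda>y. \<phi> z y) s"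
      unfolding coordinatewise_subgaussian_def \<phi>_def by auto
  qed
  have int_fst: "\<forall>y\<in>space M. integrable M (\<lambda>z. \<phi> z y)"
  proof
    fix y assume y: "y \<in> space M"
    obtain z0 where "z0 \<in> space M" using M.not_empty by blast
    have "x(k := y) \<in> space (PiM {0..<m} (\<lambda>_. M))"
      using x y by (rule fun_upd_in_space_PiM) (use k in auto)
    then have "(x(k := y))(m := z0) \<in> space (PiM {0..<Suc m} (\<lambda>_. M))"
      using \<open>z0 \<in> space M\<close> by (rule fun_upd_in_space_PiM) auto
    then have "integrable M (\<lambda>z. F (((x(k := y))(m := z0))(m := z)))"
      using sub unfolding coordinatewise_subgaussian_def subgaussian_def by blast
    then show "integrable M (\<lambda>z. \<phi> z y)" by (simp add: \<phi>_def swap)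
  qed
  have \<phi>_meas: "(\<lambda>(z, y). \<phi> z y) \<in> borel_measurable (M \<Otimes>\<^sub>M M)"
    unfolding \<phi>_def using x k F by (intro measurable_fun_upd_fun_upd_PiM) (auto simp: atLeast0_lessThan_Suc)
  have \<phi>_int: "integrable (M \<Otimes>\<^sub>M M) (\<lambda>(z, y). \<phi> z y)"
    by (rule integrable_pair_of_subgaussian_sections[OF M \<phi>_meas int_fst sub_snd])
  have marginal: "(\<lambda>y. \<integral>z. F ((x(k := y))(m := z)) \<partial>M) = (\<lambda>y. \<integral>z. \<phi> z y \<partial>M)"
    by (simp add: \<phi>_def swap)
  show "subgaussian M (\<lambda>y. \<integral>z. F ((x(k := y))(m := z)) \<partial>M) s"
    unfolding marginal subgaussian_def
  proof (intro conjI allI)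
    show "integrable M (\<lambda>y. \<integral>z. \<phi> z y \<partial>M)"
      using pair_sigma_finite.integrable_snd[OF _ \<phi>_int] M
      by (simp add: pair_sigma_finite_def prob_space_imp_sigma_finite)
    show "(\<integral>\<^sup>+y. ennreal (exp (l * ((\<integral>z. \<phi> z y \<partial>M) - (\<integral>y'. (\<integral>z. \<phi> z y' \<partial>M) \<partial>M)))) \<partial>M)
        \<le> ennreal (exp (l\<^sup>2 * s\<^sup>2 / 2))" for l
      using sub_snd unfolding subgaussian_def
      by (intro nn_integral_exp_centered_average_le[OF M \<phi>_int int_fst]) auto
  qed
qed

lemma integrable_PiM_insert_marginal:
  fixes F :: "('i \<Rightarrow> 'a) \<Rightarrow> real"
  assumes M: "prob_space M" and m: "m \<notin> I" "finite I"
    and F: "integrable (PiM (insert m I) (\<lambda>_. M)) F"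
  shows "integrable (PiM I (\<lambda>_. M)) (\<lambda>x. \<integral>z. F (x(m := z)) \<partial>M)"
proof (rule integrableI_bounded)
  interpret M: prob_space M by fact
  interpret PS: product_prob_space "\<lambda>_. M" using M by (rule product_prob_space_const)
  have F_meas: "F \<in> borel_measurable (PiM (insert m I) (\<lambda>_. M))" using F by auto
  have upd: "(\<lambda>(x, y). x(m := y)) \<in> measurable (PiM I (\<lambda>_. M) \<Otimes>\<^sub>M M) (PiM (insert m I) (\<lambda>_. M))"
    by (rule measurable_add_dim)
  show "(\<lambda>x. \<integral>z. F (x(m := z)) \<partial>M) \<in> borel_measurable (PiM I (\<lambda>_. M))"
    using measurable_compose[OF upd F_meas]
    by (intro M.borel_measurable_lebesgue_integral) (simp add: case_prod_beta')
  have "(\<integral>\<^sup>+x. ennreal (norm (\<integral>z. F (x(m := z)) \<partial>M)) \<partial>PiM I (\<lambda>_. M))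
      \<le> (\<integral>\<^sup>+x. (\<integral>\<^sup>+z. ennreal (norm (F (x(m := z)))) \<partial>M) \<partial>PiM I (\<lambda>_. M))"
  proof (rule nn_integral_mono)
    fix x
    show "ennreal (norm (\<integral>z. F (x(m := z)) \<partial>M)) \<le> (\<integral>\<^sup>+z. ennreal (norm (F (x(m := z)))) \<partial>M)"
      using integral_norm_bound_ennreal[of M "\<lambda>z. F (x(m := z))"]
      by (cases "integrable M (\<lambda>z. F (x(m := z)))") (simp_all add: not_integrable_integral_eq)
  qed
  also have "\<dots> = (\<integral>\<^sup>+x. ennreal (norm (F x)) \<partial>PiM (insert m I) (\<lambda>_. M))"
    using F_meas m by (intro PS.product_nn_integral_insert[symmetric]) auto
  also have "\<dots> < \<infinity>" using F by (simp add: integrable_iff_bounded)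
  finally show "(\<integral>\<^sup>+x. ennreal (norm (\<integral>z. F (x(m := z)) \<partial>M)) \<partial>PiM I (\<lambda>_. M)) < \<infinity>" .
qed

lemma nn_integral_exp_PiM_insert_le:
  fixes F :: "('i \<Rightarrow> 'a) \<Rightarrow> real"
  assumes M: "prob_space M" and m: "m \<notin> I" "finite I"
    and F: "F \<in> borel_measurable (PiM (insert m I) (\<lambda>_. M))"
    and last: "\<forall>x\<in>space (PiM I (\<lambda>_. M)).
      (\<integral>\<^sup>+z. ennreal (exp (l * (F (x(m := z)) - (\<integral>z'. F (x(m := z')) \<partial>M)))) \<partial>M) \<le> ennreal B"
  shows "(\<integral>\<^sup>+x. ennreal (exp (l * (F x - c))) \<partial>PiM (insert m I) (\<lambda>_. M))
    \<le> (\<integral>\<^sup>+x. ennreal (exp (l * ((\<integral>z. F (x(m := z)) \<partial>M) - c))) \<partial>PiM I (\<lambda>_. M)) * ennreal B"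
proof -
  interpret M: prob_space M by fact
  interpret PS: product_prob_space "\<lambda>_. M" using M by (rule product_prob_space_const)
  let ?P = "PiM I (\<lambda>_. M)"
  define F' where "F' x = (\<integral>z. F (x(m := z)) \<partial>M)" for x
  have upd: "(\<lambda>(x, z). F (x(m := z))) \<in> borel_measurable (?P \<Otimes>\<^sub>M M)"
    using measurable_compose[OF measurable_add_dim F] by (simp add: case_prod_beta')
  then have F'_meas: "F' \<in> borel_measurable ?P"
    unfolding F'_def by (intro M.borel_measurable_lebesgue_integral) simp
  have "(\<integral>\<^sup>+x. ennreal (exp (l * (F x - c))) \<partial>PiM (insert m I) (\<lambda>_. M))
      = (\<integral>\<^sup>+x. (\<integral>\<^sup>+z. ennreal (exp (l * (F' x - c))) * ennreal (exp (l * (F (x(m := z)) - F' x))) \<partial>M) \<partial>?P)"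
    using F m by (subst PS.product_nn_integral_insert)
      (auto intro!: nn_integral_cong simp: ennreal_mult[symmetric] exp_add[symmetric] algebra_simps
        simp del: ennreal_mult)
  also have "\<dots> = (\<integral>\<^sup>+x. ennreal (exp (l * (F' x - c))) *
      (\<integral>\<^sup>+z. ennreal (exp (l * (F (x(m := z)) - F' x))) \<partial>M) \<partial>?P)"
    using measurable_Pair1'[THEN measurable_compose, OF _ upd]
    by (intro nn_integral_cong nn_integral_cmult) (simp add: F'_def)
  also have "\<dots> \<le> (\<integral>\<^sup>+x. ennreal (exp (l * (F' x - c))) * ennreal B \<partial>?P)"
    using last by (intro nn_integral_mono mult_left_mono) (auto simp: F'_def)
  also have "\<dots> = (\<integral>\<^sup>+x. ennreal (exp (l * (F' x - c))) \<partial>?P) * ennreal B"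
    by (intro nn_integral_multc) (use F'_meas in measurable)
  finally show ?thesis by (simp add: F'_def)
qed

text \<open>The moment-generating-function form of McDiarmid's inequality, proved by integrating out one
  coordinate at a time.\<close>
theorem nn_integral_exp_centered_PiM_le:
  fixes F :: "(nat \<Rightarrow> 'a) \<Rightarrow> real"
  assumes M: "prob_space M"
    and F: "integrable (PiM {0..<m} (\<lambda>_. M)) F"
    and sub: "coordinatewise_subgaussian M m F s"
  shows "(\<integral>\<^sup>+x. ennreal (exp (l * (F x - (\<integral>x. F x \<partial>PiM {0..<m} (\<lambda>_. M))))) \<partial>PiM {0..<m} (\<lambda>_. M))
     \<le> ennreal (exp (real m * l\<^sup>2 * s\<^sup>2 / 2))"
  using F sub
proof (induction m arbitrary: F)
  case 0
  let ?P = "PiM ({} :: nat set) (\<lambda>_. M)"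
  interpret P: prob_space ?P
    by (intro prob_space_PiM) (use M in auto)
  have "(\<integral>x. F x \<partial>?P) = (\<integral>x. F (\<lambda>_. undefined) \<partial>?P)"
    by (rule Bochner_Integration.integral_cong) (auto simp: space_PiM)
  then have "F x = (\<integral>x. F x \<partial>?P)" if "x \<in> space ?P" for x
    using that P.prob_space by (simp add: space_PiM)
  then have "(\<integral>\<^sup>+x. ennreal (exp (l * (F x - (\<integral>x. F x \<partial>?P)))) \<partial>?P) = (\<integral>\<^sup>+x. 1 \<partial>?P)"
    by (intro nn_integral_cong) simp
  then show ?case by (simp add: P.emeasure_space_1)
next
  case (Suc m)
  interpret M: prob_space M by fact
  interpret PS: product_prob_space "\<lambda>_. M" using M by (rule product_prob_space_const)
  let ?P = "PiM {0..<m} (\<lambda>_. M)"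
  define F' where "F' x = (\<integral>z. F (x(m := z)) \<partial>M)" for x
  have insert_m: "{0..<Suc m} = insert m {0..<m}" by auto
  have F_int: "integrable (PiM (insert m {0..<m}) (\<lambda>_. M)) F"
    using Suc.prems(1) by (simp only: insert_m)
  then have F'_int: "integrable ?P F'"
    unfolding F'_def using M by (intro integrable_PiM_insert_marginal) auto
  have mean: "(\<integral>x. F x \<partial>PiM {0..<Suc m} (\<lambda>_. M)) = (\<integral>x. F' x \<partial>?P)"
    using PS.product_integral_insert[of "{0..<m}" m F] F_int by (simp add: insert_m F'_def)
  have last: "\<forall>x\<in>space ?P. (\<integral>\<^sup>+z. ennreal (exp (l * (F (x(m := z)) - F' x))) \<partial>M)
      \<le> ennreal (exp (l\<^sup>2 * s\<^sup>2 / 2))"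
  proof
    fix x assume "x \<in> space ?P"
    moreover obtain z0 where "z0 \<in> space M" using M.not_empty by blast
    ultimately have "x(m := z0) \<in> space (PiM {0..<Suc m} (\<lambda>_. M))"
      by (rule fun_upd_in_space_PiM) auto
    with Suc.prems(2) show "(\<integral>\<^sup>+z. ennreal (exp (l * (F (x(m := z)) - F' x))) \<partial>M) \<le> ennreal (exp (l\<^sup>2 * s\<^sup>2 / 2))"
      unfolding coordinatewise_subgaussian_def subgaussian_def F'_def by fastforce
  qed
  have "F \<in> borel_measurable (PiM {0..<Suc m} (\<lambda>_. M))" using Suc.prems(1) by auto
  from coordinatewise_subgaussian_marginal[OF M this Suc.prems(2)]
  have "coordinatewise_subgaussian M m F' s" unfolding F'_def[abs_def] .
  with Suc.IH[OF F'_int] have IH: "(\<integral>\<^sup>+x. ennreal (exp (l * (F' x - (\<integral>x. F' x \<partial>?P)))) \<partial>?P)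
      \<le> ennreal (exp (real m * l\<^sup>2 * s\<^sup>2 / 2))" .
  have "(\<integral>\<^sup>+x. ennreal (exp (l * (F x - (\<integral>x. F' x \<partial>?P)))) \<partial>PiM (insert m {0..<m}) (\<lambda>_. M))
      \<le> (\<integral>\<^sup>+x. ennreal (exp (l * (F' x - (\<integral>x. F' x \<partial>?P)))) \<partial>?P) * ennreal (exp (l\<^sup>2 * s\<^sup>2 / 2))"
    using M F_int last unfolding F'_def by (intro nn_integral_exp_PiM_insert_le) auto
  also have "\<dots> \<le> ennreal (exp (real m * l\<^sup>2 * s\<^sup>2 / 2)) * ennreal (exp (l\<^sup>2 * s\<^sup>2 / 2))"
    using IH by (rule mult_right_mono) simp
  also have "\<dots> = ennreal (exp (real (Suc m) * l\<^sup>2 * s\<^sup>2 / 2))"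
    by (simp add: ennreal_mult[symmetric] exp_add[symmetric] algebra_simps del: ennreal_mult)
  finally show ?case unfolding mean by (simp only: insert_m)
qed

lemma nn_integral_exp_gen_gap_le:
  fixes M :: "'a measure" and h :: "'a \<Rightarrow> real"
  assumes M: "prob_space M" and n: "n \<ge> 1" and h: "h \<in> borel_measurable M"
    and sub: "\<forall>l::real. integrable M (\<lambda>y. exp (l * (h y - (\<integral>y'. h y' \<partial>M)))) \<and>
        (\<integral>y. exp (l * (h y - (\<integral>y'. h y' \<partial>M))) \<partial>M) \<le> exp (l\<^sup>2 * r\<^sup>2 / 2)"
  shows "(\<integral>\<^sup>+x. ennreal (exp (l * gen_gap M n h x)) \<partial>sample_space n M) \<le> ennreal (exp (l\<^sup>2 * r\<^sup>2 / (2 * n)))"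
proof -
  interpret M: prob_space M by fact
  interpret PS: product_prob_space "\<lambda>_. M" using M by (rule product_prob_space_const)
  define E where "E = (\<integral>y. h y \<partial>M)"
  define f where "f y = exp (- (l / n) * (h y - E))" for y
  have f_meas[measurable]: "f \<in> borel_measurable M" unfolding f_def[abs_def] using h by measurable
  have "(\<Sum>i<n. - (l / n) * (h (x i) - E)) = - (l / n) * ((\<Sum>i<n. h (x i)) - n * E)" for x
    by (simp only: sum_distrib_left[symmetric] sum_subtractf) simp
  then have "l * gen_gap M n h x = (\<Sum>i<n. - (l / n) * (h (x i) - E))" for x
    using n by (simp add: gen_gap_def E_def field_simps)
  then have "ennreal (exp (l * gen_gap M n h x)) = (\<Prod>i\<in>{0..<n}. ennreal (f (x i)))" for x
    by (simp add: exp_sum f_def prod_ennreal lessThan_atLeast0)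
  then have "(\<integral>\<^sup>+x. ennreal (exp (l * gen_gap M n h x)) \<partial>sample_space n M)
      = (\<integral>\<^sup>+x. (\<Prod>i\<in>{0..<n}. ennreal (f (x i))) \<partial>sample_space n M)"
    by simp
  also have "\<dots> = (\<Prod>i\<in>{0..<n}. (\<integral>\<^sup>+y. ennreal (f y) \<partial>M))"
    by (rule PS.product_nn_integral_prod) auto
  also have "\<dots> = (\<integral>\<^sup>+y. ennreal (f y) \<partial>M) ^ n" by simp
  also have "\<dots> \<le> ennreal (exp ((l / n)\<^sup>2 * r\<^sup>2 / 2)) ^ n"
  proof (rule power_mono)
    have "integrable M f" and mgf: "(\<integral>y. f y \<partial>M) \<le> exp ((- (l / n))\<^sup>2 * r\<^sup>2 / 2)"
      using sub unfolding f_def E_def by blast+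
    moreover have "0 \<le> f y" for y by (simp add: f_def)
    ultimately have "(\<integral>\<^sup>+y. ennreal (f y) \<partial>M) = ennreal (\<integral>y. f y \<partial>M)"
      by (intro nn_integral_eq_integral) auto
    with mgf show "(\<integral>\<^sup>+y. ennreal (f y) \<partial>M) \<le> ennreal (exp ((l / n)\<^sup>2 * r\<^sup>2 / 2))"
      by (simp add: ennreal_leI)
  qed simp
  also have "\<dots> = ennreal (exp (l\<^sup>2 * r\<^sup>2 / (2 * n)))"
    using n by (simp add: ennreal_power exp_of_nat_mult[symmetric] power_divide power2_eq_square)
  finally show ?thesis .
qed

lemma nn_integral_gen_gap_tail_le:
  fixes M :: "'a measure" and h :: "'a \<Rightarrow> real"
  assumes M: "prob_space M" and n: "n \<ge> 1" and h: "h \<in> borel_measurable M"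
    and r: "r > 0" and t: "t \<ge> 0"
    and sub: "\<forall>l::real. integrable M (\<lambda>y. exp (l * (h y - (\<integral>y'. h y' \<partial>M)))) \<and>
        (\<integral>y. exp (l * (h y - (\<integral>y'. h y' \<partial>M))) \<partial>M) \<le> exp (l\<^sup>2 * r\<^sup>2 / 2)"
  shows "(\<integral>\<^sup>+x. ennreal (of_bool (r * t < gen_gap M n h x)) \<partial>sample_space n M)
    \<le> ennreal (exp (- real n * t\<^sup>2 / 2))"
proof -
  define l where "l = real n * t / r"
  have "l \<ge> 0" using r t by (simp add: l_def)
  have "ennreal (of_bool (r * t < g)) \<le> ennreal (exp (- (l * r * t))) * ennreal (exp (l * g))" for g
  proof (cases "r * t < g")
    case True
    with \<open>l \<ge> 0\<close> have "1 \<le> exp (l * (g - r * t))" by (simp add: mult_nonneg_nonneg)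
    then show ?thesis
      using True by (simp add: ennreal_mult[symmetric] exp_add[symmetric] algebra_simps del: ennreal_mult)
  qed simp
  then have "(\<integral>\<^sup>+x. ennreal (of_bool (r * t < gen_gap M n h x)) \<partial>sample_space n M)
      \<le> (\<integral>\<^sup>+x. ennreal (exp (- (l * r * t))) * ennreal (exp (l * gen_gap M n h x)) \<partial>sample_space n M)"
    by (intro nn_integral_mono) simp
  also have "\<dots> = ennreal (exp (- (l * r * t))) * (\<integral>\<^sup>+x. ennreal (exp (l * gen_gap M n h x)) \<partial>sample_space n M)"
  proof (intro nn_integral_cmult)
    have [measurable]: "(\<lambda>x. h (x i)) \<in> borel_measurable (sample_space n M)" if "i \<in> {0..<n}" for i
      using measurable_compose[OF measurable_component_singleton[OF that] h] .
    show "(\<lambda>x. ennreal (exp (l * gen_gap M n h x))) \<in> borel_measurable (sample_space n M)"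
      unfolding gen_gap_def lessThan_atLeast0 by measurable
  qed
  also have "\<dots> \<le> ennreal (exp (- (l * r * t))) * ennreal (exp (l\<^sup>2 * r\<^sup>2 / (2 * n)))"
    using nn_integral_exp_gen_gap_le[OF M n h sub] by (rule mult_left_mono) simp
  also have "\<dots> = ennreal (exp (- real n * t\<^sup>2 / 2))"
    using r n by (simp add: ennreal_mult[symmetric] exp_add[symmetric] l_def field_simps power2_eq_square
        del: ennreal_mult)
  finally show ?thesis .
qed

lemma amgm_product_le:
  fixes a b c \<eta> :: real
  assumes "0 \<le> a" "a \<le> 1" "0 \<le> b" "0 \<le> c" "\<eta> > 0"
  shows "b * a * c \<le> a / (2 * \<eta>) + \<eta> / 4 * b ^ 4 + \<eta> / 4 * c ^ 4"
proof -
  have bc: "b * c \<le> (b\<^sup>2 + c\<^sup>2) / 2"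
    using sum_squares_ge_zero[of "b - c" 0] by (simp add: power2_eq_square algebra_simps)
  have square: "a * v \<le> a / (2 * \<eta>) + \<eta> / 2 * v\<^sup>2" for v
  proof -
    have "2 * \<eta> * (a * v) \<le> a\<^sup>2 + \<eta>\<^sup>2 * v\<^sup>2"
      using sum_squares_ge_zero[of "a - \<eta> * v" 0] by (simp add: power2_eq_square algebra_simps)
    also have "\<dots> \<le> a + \<eta>\<^sup>2 * v\<^sup>2" using assms by (simp add: power2_eq_square mult_le_one mult_left_le)
    finally show ?thesis using assms by (simp add: field_simps power2_eq_square)
  qed
  have "b * a * c = a * (b * c)" by simp
  also have "\<dots> \<le> a * ((b\<^sup>2 + c\<^sup>2) / 2)" using bc assms by (intro mult_left_mono) auto
  also have "\<dots> = (a * b\<^sup>2) / 2 + (a * c\<^sup>2) / 2" by (simp add: algebra_simps)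
  also have "\<dots> \<le> (a / (2 * \<eta>) + \<eta> / 2 * (b\<^sup>2)\<^sup>2) / 2 + (a / (2 * \<eta>) + \<eta> / 2 * (c\<^sup>2)\<^sup>2) / 2"
    using add_mono[OF divide_right_mono[OF square[of "b\<^sup>2"], of 2] divide_right_mono[OF square[of "c\<^sup>2"], of 2]]
    by simp
  also have "\<dots> = a / (2 * \<eta>) + \<eta> / 4 * b ^ 4 + \<eta> / 4 * c ^ 4"
    by (simp add: field_simps power2_eq_square power4_eq_xxxx)
  finally show ?thesis .
qed

lemma nn_integral_amgm_le:
  fixes a b c :: "'b \<Rightarrow> real" and \<eta> :: real
  assumes N: "prob_space N" and am: "a \<in> borel_measurable N" and bm: "b \<in> borel_measurable N"
    and cm: "c \<in> borel_measurable N"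
    and a01: "\<forall>h\<in>space N. 0 \<le> a h \<and> a h \<le> 1" and b0: "\<forall>h\<in>space N. 0 \<le> b h"
    and c0: "\<forall>h\<in>space N. 0 \<le> c h" and \<eta>: "\<eta> > 0"
  shows "(\<integral>\<^sup>+h. ennreal (b h * a h) \<partial>N) * (\<integral>\<^sup>+h. ennreal (c h) \<partial>N)
    \<le> ennreal (1/(2*\<eta>)) * (\<integral>\<^sup>+h. ennreal (a h) \<partial>N) + ennreal (\<eta>/4) * (\<integral>\<^sup>+h. ennreal (b h ^ 4) \<partial>N)
       + ennreal (\<eta>/4) * (\<integral>\<^sup>+h. ennreal (c h ^ 4) \<partial>N)"
proof -
  interpret N: prob_space N by fact
  let ?K = "ennreal (\<eta>/4) * (\<integral>\<^sup>+h. ennreal (c h ^ 4) \<partial>N)"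
  have "(\<integral>\<^sup>+h. ennreal (b h * a h) \<partial>N) * (\<integral>\<^sup>+h. ennreal (c h) \<partial>N)
      = (\<integral>\<^sup>+h. ennreal (b h * a h) * (\<integral>\<^sup>+h'. ennreal (c h') \<partial>N) \<partial>N)"
    by (rule nn_integral_multc[symmetric]) (use am bm in measurable)
  also have "\<dots> = (\<integral>\<^sup>+h. (\<integral>\<^sup>+h'. ennreal (b h * a h) * ennreal (c h') \<partial>N) \<partial>N)"
    by (rule nn_integral_cong) (rule nn_integral_cmult[symmetric], use cm in measurable)
  also have "\<dots> \<le> (\<integral>\<^sup>+h. (\<integral>\<^sup>+h'. (ennreal (1/(2*\<eta>)) * ennreal (a h) + ennreal (\<eta>/4) * ennreal (b h ^ 4))
        + ennreal (\<eta>/4) * ennreal (c h' ^ 4) \<partial>N) \<partial>N)"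
  proof (intro nn_integral_mono)
    fix h h' assume h: "h \<in> space N" and h': "h' \<in> space N"
    have r: "b h * a h * c h' \<le> a h / (2 * \<eta>) + \<eta> / 4 * b h ^ 4 + \<eta> / 4 * c h' ^ 4"
      by (rule amgm_product_le) (use a01 b0 c0 h h' \<eta> in auto)
    have "ennreal (b h * a h) * ennreal (c h') = ennreal (b h * a h * c h')"
      using a01 b0 c0 h h' by (simp add: ennreal_mult)
    also have "\<dots> \<le> ennreal (a h / (2 * \<eta>) + \<eta> / 4 * b h ^ 4 + \<eta> / 4 * c h' ^ 4)"
      using r by (rule ennreal_leI)
    also have "\<dots> = ennreal (1/(2*\<eta>)) * ennreal (a h) + ennreal (\<eta>/4) * ennreal (b h ^ 4)
        + ennreal (\<eta>/4) * ennreal (c h' ^ 4)"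
      using a01 b0 c0 h h' \<eta> by (simp add: ennreal_mult[symmetric] ennreal_plus[symmetric] del: ennreal_plus)
    finally show "ennreal (b h * a h) * ennreal (c h') \<le> ennreal (1/(2*\<eta>)) * ennreal (a h) + ennreal (\<eta>/4) * ennreal (b h ^ 4)
        + ennreal (\<eta>/4) * ennreal (c h' ^ 4)" .
  qed
  also have "\<dots> = (\<integral>\<^sup>+h. (ennreal (1/(2*\<eta>)) * ennreal (a h) + ennreal (\<eta>/4) * ennreal (b h ^ 4)) + ?K \<partial>N)"
  proof (rule nn_integral_cong)
    fix h assume h: "h \<in> space N"
    show "(\<integral>\<^sup>+h'. (ennreal (1/(2*\<eta>)) * ennreal (a h) + ennreal (\<eta>/4) * ennreal (b h ^ 4))
        + ennreal (\<eta>/4) * ennreal (c h' ^ 4) \<partial>N) = (ennreal (1/(2*\<eta>)) * ennreal (a h) + ennreal (\<eta>/4) * ennreal (b h ^ 4)) + ?K"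
      using cm by (subst nn_integral_add) (auto simp: N.emeasure_space_1 nn_integral_cmult)
  qed
  also have "\<dots> = ennreal (1/(2*\<eta>)) * (\<integral>\<^sup>+h. ennreal (a h) \<partial>N) + ennreal (\<eta>/4) * (\<integral>\<^sup>+h. ennreal (b h ^ 4) \<partial>N) + ?K"
    using am bm by (simp add: nn_integral_add nn_integral_cmult N.emeasure_space_1)
  finally show ?thesis .
qed

lemma emeasure_exp_tilted_le:
  fixes g :: "'b \<Rightarrow> real"
  assumes P: "prob_space P" and g: "g \<in> borel_measurable P" and int: "integrable P (\<lambda>h. exp (g h))"
    and S: "S \<in> sets P"
  shows "emeasure (density P (\<lambda>h. ennreal (exp (g h) / (\<integral>h. exp (g h) \<partial>P)))) S
    \<le> (\<integral>\<^sup>+h. ennreal (exp (g h) * indicator S h) \<partial>P) * (\<integral>\<^sup>+h. ennreal (exp (- g h)) \<partial>P)"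
proof -
  define Y where "Y = (\<integral>h. exp (g h) \<partial>P)"
  have "Y \<ge> 0" unfolding Y_def by (intro integral_nonneg_AE) auto
  have "emeasure (density P (\<lambda>h. ennreal (exp (g h) / Y))) S
      = (\<integral>\<^sup>+h. ennreal (1 / Y) * ennreal (exp (g h) * indicator S h) \<partial>P)"
    using g S \<open>Y \<ge> 0\<close>
    by (subst emeasure_density) (auto intro!: nn_integral_cong simp: ennreal_mult[symmetric] indicator_def)
  also have "\<dots> = ennreal (1 / Y) * (\<integral>\<^sup>+h. ennreal (exp (g h) * indicator S h) \<partial>P)"
    by (intro nn_integral_cmult) (use g S in measurable)
  also have "\<dots> \<le> (\<integral>\<^sup>+h. ennreal (exp (- g h)) \<partial>P) * (\<integral>\<^sup>+h. ennreal (exp (g h) * indicator S h) \<partial>P)"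
    using one_div_integral_le_nn_integral_one_div[OF P int]
    by (intro mult_right_mono) (simp_all add: Y_def exp_minus inverse_eq_divide)
  finally show ?thesis by (simp add: Y_def mult.commute)
qed

lemma nn_integral_nn_integral_le_of_sections:
  fixes f :: "'b \<Rightarrow> 'c \<Rightarrow> ennreal"
  assumes P: "prob_space P" and X: "sigma_finite_measure X"
    and f: "(\<lambda>(h, x). f h x) \<in> borel_measurable (P \<Otimes>\<^sub>M X)"
    and bound: "\<forall>h\<in>space P. (\<integral>\<^sup>+x. f h x \<partial>X) \<le> c"
  shows "(\<integral>\<^sup>+x. (\<integral>\<^sup>+h. f h x \<partial>P) \<partial>X) \<le> c"
proof -
  interpret P: prob_space P by fact
  interpret X: sigma_finite_measure X by fact
  interpret PX: pair_sigma_finite P X by unfold_locales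
  have "(\<integral>\<^sup>+x. (\<integral>\<^sup>+h. f h x \<partial>P) \<partial>X) = (\<integral>\<^sup>+h. (\<integral>\<^sup>+x. f h x \<partial>X) \<partial>P)"
    by (rule PX.Fubini') (use f in simp)
  also have "\<dots> \<le> (\<integral>\<^sup>+h. c \<partial>P)" using bound by (intro nn_integral_mono) simp
  finally show ?thesis by (simp add: P.emeasure_space_1)
qed

lemma nn_integral_ge_one_minus:
  assumes X: "prob_space X" and U: "U \<in> borel_measurable X" and "\<delta> \<ge> 0"
    and int: "(\<integral>\<^sup>+x. U x \<partial>X) \<le> ennreal \<delta>"
    and f: "\<forall>x\<in>space X. 1 - U x \<le> f x"
  shows "ennreal (1 - \<delta>) \<le> (\<integral>\<^sup>+x. f x \<partial>X)"
proof -
  interpret X: prob_space X by fact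
  have "1 = (\<integral>\<^sup>+x. 1 \<partial>X)" by (simp add: X.emeasure_space_1)
  also have "\<dots> \<le> (\<integral>\<^sup>+x. (1 - U x) + U x \<partial>X)"
  proof (intro nn_integral_mono)
    fix x
    show "1 \<le> (1 - U x) + U x"
      by (cases "U x \<le> 1") (simp_all add: diff_add_cancel_ennreal add_increasing)
  qed
  also have "\<dots> = (\<integral>\<^sup>+x. 1 - U x \<partial>X) + (\<integral>\<^sup>+x. U x \<partial>X)"
    using U by (intro nn_integral_add) auto
  also have "\<dots> \<le> (\<integral>\<^sup>+x. f x \<partial>X) + ennreal \<delta>"
    using f int by (intro add_mono nn_integral_mono) auto
  finally have "1 \<le> ennreal \<delta> + (\<integral>\<^sup>+x. f x \<partial>X)" by (simp add: add.commute)
  then show ?thesis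
    using \<open>\<delta> \<ge> 0\<close> by (simp add: ennreal_minus[symmetric] ennreal_minus_le_iff)
qed

lemma exp_rate_le:
  fixes \<sigma> \<delta> :: real and n :: nat
  assumes \<sigma>: "\<sigma> \<ge> 0" and \<delta>: "0 < \<delta>" "\<delta> \<le> 1" and n: "n > 0"
  shows "exp (8 * real n * \<sigma>\<^sup>2 - real n * (sqrt 32 * \<sigma> + sqrt (4 * ln (1 / \<delta>) / real n))\<^sup>2 / 4) \<le> \<delta>"
proof -
  define A where "A = sqrt 32 * \<sigma>"
  define B where "B = sqrt (4 * ln (1 / \<delta>) / real n)"
  have "ln (1 / \<delta>) \<ge> 0" using \<delta> by simp
  have "A \<ge> 0" "B \<ge> 0" using \<sigma> \<open>ln (1 / \<delta>) \<ge> 0\<close> by (simp_all add: A_def B_def)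
  then have "A\<^sup>2 + B\<^sup>2 = 32 * \<sigma>\<^sup>2 + 4 * ln (1 / \<delta>) / real n"
    by (simp add: A_def B_def power_mult_distrib)
  moreover have "A\<^sup>2 + B\<^sup>2 \<le> (A + B)\<^sup>2"
    using \<open>A \<ge> 0\<close> \<open>B \<ge> 0\<close> by (simp add: power2_sum)
  ultimately have "real n * (32 * \<sigma>\<^sup>2 + 4 * ln (1 / \<delta>) / real n) \<le> real n * (A + B)\<^sup>2"
    by (intro mult_left_mono) auto
  then have "32 * real n * \<sigma>\<^sup>2 + 4 * ln (1 / \<delta>) \<le> real n * (A + B)\<^sup>2"
    using n by (simp add: distrib_left)
  then have "exp (8 * real n * \<sigma>\<^sup>2 - real n * (A + B)\<^sup>2 / 4) \<le> exp (- ln (1 / \<delta>))" by simp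
  also have "\<dots> = \<delta>" using \<delta> by (simp add: ln_div)
  finally show ?thesis by (simp add: A_def B_def)
qed

locale hamiltonian_algorithm =
  fixes M :: "'a measure" and Pr :: "('a \<Rightarrow> real) measure" and n :: nat
    and Q :: "(nat \<Rightarrow> 'a) \<Rightarrow> ('a \<Rightarrow> real) measure"
    and H :: "('a \<Rightarrow> real) \<Rightarrow> (nat \<Rightarrow> 'a) \<Rightarrow> real"
    and \<rho> :: "('a \<Rightarrow> real) \<Rightarrow> real" and \<sigma> :: real
  assumes M: "prob_space M"
    and n: "n \<ge> 1"
    and hyp_meas: "\<forall>h\<in>space Pr. h \<in> borel_measurable M"
    and eval_meas: "(\<lambda>(h, y). h y) \<in> borel_measurable (Pr \<Otimes>\<^sub>M M)"
    and Q_ac: "abs_cont_alg Pr (sample_space n M) Q"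
    and Q_H: "is_hamiltonian Pr (sample_space n M) Q H"
    and expH_int: "integrable Pr (\<lambda>h. exp (\<integral>x. H h x \<partial>sample_space n M))"
    and expH_pos: "(\<integral>h. exp (\<integral>x. H h x \<partial>sample_space n M) \<partial>Pr) > 0"
    and H_int: "\<forall>h\<in>space Pr. integrable (sample_space n M) (H h)"
    and \<rho>_meas: "\<rho> \<in> borel_measurable Pr"
    and h_subg: "\<forall>h\<in>space Pr. \<rho> h > 0 \<and> (\<forall>l::real.
        integrable M (\<lambda>y. exp (l * (h y - (\<integral>y'. h y' \<partial>M)))) \<and>
        (\<integral>y. exp (l * (h y - (\<integral>y'. h y' \<partial>M))) \<partial>M) \<le> exp (l\<^sup>2 * (\<rho> h)\<^sup>2 / 2))"
    and \<sigma>_pos: "\<sigma> > 0"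
    and H_int_k: "\<forall>h\<in>space Pr. \<forall>x\<in>space (sample_space n M). \<forall>k\<in>{0..<n}.
        integrable M (\<lambda>y. H h (x(k := y)))"
    and H_subg: "\<forall>l::real. \<forall>k\<in>{0..<n}. \<forall>h\<in>space Pr. \<forall>x\<in>space (sample_space n M).
        integrable M (\<lambda>y. exp (l * (H h (x(k := y)) - (\<integral>y'. H h (x(k := y')) \<partial>M)))) \<and>
        (\<integral>y. exp (l * (H h (x(k := y)) - (\<integral>y'. H h (x(k := y')) \<partial>M))) \<partial>M)
          \<le> exp (l\<^sup>2 * \<sigma>\<^sup>2 / 2)"
begin

abbreviation XS :: "(nat \<Rightarrow> 'a) measure" where "XS \<equiv> sample_space n M"

definition expected_hamiltonian :: "('a \<Rightarrow> real) \<Rightarrow> real"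
  where "expected_hamiltonian h = (\<integral>x. H h x \<partial>XS)"

definition centered_hamiltonian :: "('a \<Rightarrow> real) \<Rightarrow> (nat \<Rightarrow> 'a) \<Rightarrow> real"
  where "centered_hamiltonian h x = H h x - expected_hamiltonian h"

definition gibbs_prior :: "('a \<Rightarrow> real) measure"
  where "gibbs_prior = density Pr (\<lambda>h. ennreal (exp (expected_hamiltonian h) /
      (\<integral>h'. exp (expected_hamiltonian h') \<partial>Pr)))"

lemma prob_space_XS: "prob_space XS"
  using M by (intro prob_space_PiM) auto

lemma measurable_hamiltonian: "(\<lambda>(h, x). H h x) \<in> borel_measurable (Pr \<Otimes>\<^sub>M XS)"
  using Q_H unfolding is_hamiltonian_def by blast

lemma measurable_expected_hamiltonian[measurable]: "expected_hamiltonian \<in> borel_measurable Pr"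
proof -
  interpret X: prob_space XS by (rule prob_space_XS)
  show ?thesis
    unfolding expected_hamiltonian_def[abs_def] using measurable_hamiltonian
    by (intro X.borel_measurable_lebesgue_integral) simp
qed

lemma measurable_centered_hamiltonian:
  "(\<lambda>(h, x). centered_hamiltonian h x) \<in> borel_measurable (Pr \<Otimes>\<^sub>M XS)"
  unfolding centered_hamiltonian_def using measurable_hamiltonian by measurable

lemma measurable_gen_gap: "(\<lambda>(h, x). gen_gap M n h x) \<in> borel_measurable (Pr \<Otimes>\<^sub>M XS)"
proof -
  interpret M: prob_space M by (fact M)
  have "(\<lambda>h. \<integral>y. h y \<partial>M) \<in> borel_measurable Pr"
    using eval_meas by (intro M.borel_measurable_lebesgue_integral) simp
  then have [measurable]: "(\<lambda>p. \<integral>y. fst p y \<partial>M) \<in> borel_measurable (Pr \<Otimes>\<^sub>M XS)"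
    by measurable
  have [measurable]: "(\<lambda>p. fst p (snd p i)) \<in> borel_measurable (Pr \<Otimes>\<^sub>M XS)" if "i \<in> {0..<n}" for i
  proof -
    have "(\<lambda>p. (fst p, snd p i)) \<in> measurable (Pr \<Otimes>\<^sub>M XS) (Pr \<Otimes>\<^sub>M M)"
      using that by measurable
    from measurable_compose[OF this eval_meas] show ?thesis by simp
  qed
  show ?thesis
    unfolding gen_gap_def case_prod_beta lessThan_atLeast0 by measurable
qed

lemma sets_gibbs_prior[measurable_cong]: "sets gibbs_prior = sets Pr"
  by (simp add: gibbs_prior_def)

lemma prob_space_gibbs_prior: "prob_space gibbs_prior"
proof (rule prob_spaceI)
  define Z where "Z = (\<integral>h. exp (expected_hamiltonian h) \<partial>Pr)"
  have "Z > 0" using expH_pos by (simp add: Z_def expected_hamiltonian_def)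
  have "emeasure gibbs_prior (space gibbs_prior) = (\<integral>\<^sup>+h. ennreal (exp (expected_hamiltonian h) / Z) \<partial>Pr)"
    unfolding gibbs_prior_def Z_def[symmetric]
    by (subst emeasure_density) (auto intro!: nn_integral_cong)
  also have "\<dots> = ennreal (\<integral>h. exp (expected_hamiltonian h) / Z \<partial>Pr)"
    using expH_int \<open>Z > 0\<close> by (intro nn_integral_eq_integral) (auto simp: expected_hamiltonian_def)
  also have "\<dots> = 1" using \<open>Z > 0\<close> by (simp add: Z_def)
  finally show "emeasure gibbs_prior (space gibbs_prior) = 1" .
qed

lemma posterior_eq_exp_tilt:
  assumes x: "x \<in> space XS"
  shows "integrable gibbs_prior (\<lambda>h. exp (centered_hamiltonian h x))"
    and "Q x = density gibbs_prior (\<lambda>h. ennreal (exp (centered_hamiltonian h x) /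
      (\<integral>h. exp (centered_hamiltonian h x) \<partial>gibbs_prior)))"
proof -
  define Z where "Z = partition_fun Pr H x"
  define Z0 where "Z0 = (\<integral>h. exp (expected_hamiltonian h) \<partial>Pr)"
  define w where "w h = exp (expected_hamiltonian h) / Z0" for h
  have Z: "Z > 0" "integrable Pr (\<lambda>h. exp (H h x))" and Qx: "Q x = density Pr (\<lambda>h. ennreal (exp (H h x) / Z))"
    using Q_H x unfolding is_hamiltonian_def Z_def by auto
  have "Z0 > 0" using expH_pos by (simp add: Z0_def expected_hamiltonian_def)
  have [measurable]: "(\<lambda>h. H h x) \<in> borel_measurable Pr"
    using measurable_compose[OF measurable_Pair2'[OF x] measurable_hamiltonian] by simp
  have prior: "gibbs_prior = density Pr w" and w_nonneg: "\<And>h. w h \<ge> 0"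
    using \<open>Z0 > 0\<close> by (simp_all add: gibbs_prior_def w_def Z0_def)
  have [measurable]: "w \<in> borel_measurable Pr" unfolding w_def[abs_def] by measurable
  have w_tilt: "w h * exp (H h x - expected_hamiltonian h) = exp (H h x) / Z0" for h
    by (simp add: w_def exp_diff)
  show int: "integrable gibbs_prior (\<lambda>h. exp (centered_hamiltonian h x))"
    unfolding prior centered_hamiltonian_def using Z(2) w_nonneg
    by (subst integrable_density) (auto simp: w_tilt)
  have "(\<integral>h. exp (centered_hamiltonian h x) \<partial>gibbs_prior) = (\<integral>h. exp (H h x) / Z0 \<partial>Pr)"
    unfolding prior centered_hamiltonian_def using w_nonneg
    by (subst integral_density) (auto simp: w_tilt)
  also have "\<dots> = Z / Z0" by (simp add: Z_def partition_fun_def)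
  finally have Y: "(\<integral>h. exp (centered_hamiltonian h x) \<partial>gibbs_prior) = Z / Z0" .
  have "density gibbs_prior (\<lambda>h. ennreal (exp (centered_hamiltonian h x) / (Z / Z0)))
      = density Pr (\<lambda>h. ennreal (w h) * ennreal (exp (centered_hamiltonian h x) / (Z / Z0)))"
    unfolding prior centered_hamiltonian_def by (subst density_density_eq) auto
  also have "\<dots> = Q x"
    unfolding Qx using w_nonneg \<open>Z > 0\<close> \<open>Z0 > 0\<close>
    by (intro density_cong) (auto simp: ennreal_mult[symmetric] w_def centered_hamiltonian_def exp_diff)
  finally show "Q x = density gibbs_prior (\<lambda>h. ennreal (exp (centered_hamiltonian h x) /
      (\<integral>h. exp (centered_hamiltonian h x) \<partial>gibbs_prior)))"
    by (simp add: Y)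
qed

lemma nn_integral_exp_centered_hamiltonian_le:
  assumes h: "h \<in> space Pr"
  shows "(\<integral>\<^sup>+x. ennreal (exp (l * centered_hamiltonian h x)) \<partial>XS) \<le> ennreal (exp (real n * l\<^sup>2 * \<sigma>\<^sup>2 / 2))"
proof -
  have "coordinatewise_subgaussian M n (H h) \<sigma>"
    unfolding coordinatewise_subgaussian_def subgaussian_def
  proof (intro ballI allI impI conjI)
    fix x k l assume x: "x \<in> space XS" and "k < n"
    then show "integrable M (\<lambda>y. H h (x(k := y)))" using H_int_k h by auto
    have "integrable M (\<lambda>y. exp (l * (H h (x(k := y)) - (\<integral>y'. H h (x(k := y')) \<partial>M))))"
      and mgf: "(\<integral>y. exp (l * (H h (x(k := y)) - (\<integral>y'. H h (x(k := y')) \<partial>M))) \<partial>M) \<le> exp (l\<^sup>2 * \<sigma>\<^sup>2 / 2)"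
      using H_subg h x \<open>k < n\<close> by auto
    then show "(\<integral>\<^sup>+y. ennreal (exp (l * (H h (x(k := y)) - (\<integral>y'. H h (x(k := y')) \<partial>M)))) \<partial>M)
        \<le> ennreal (exp (l\<^sup>2 * \<sigma>\<^sup>2 / 2))"
      by (subst nn_integral_eq_integral) (auto intro: ennreal_leI)
  qed
  with M H_int h show ?thesis
    unfolding centered_hamiltonian_def expected_hamiltonian_def
    by (intro nn_integral_exp_centered_PiM_le) auto
qed

definition posterior_tail_majorant :: "real \<Rightarrow> real \<Rightarrow> (nat \<Rightarrow> 'a) \<Rightarrow> ennreal"
  where "posterior_tail_majorant \<eta> t x =
    ennreal (1 / (2 * \<eta>)) * (\<integral>\<^sup>+h. ennreal (of_bool (\<rho> h * t < gen_gap M n h x)) \<partial>gibbs_prior)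
    + ennreal (\<eta> / 4) * (\<integral>\<^sup>+h. ennreal (exp (centered_hamiltonian h x) ^ 4) \<partial>gibbs_prior)
    + ennreal (\<eta> / 4) * (\<integral>\<^sup>+h. ennreal (exp (- centered_hamiltonian h x) ^ 4) \<partial>gibbs_prior)"

lemma measurable_gibbs_prior_XS: "measurable (gibbs_prior \<Otimes>\<^sub>M XS) N = measurable (Pr \<Otimes>\<^sub>M XS) N"
  by (intro measurable_cong_sets sets_pair_measure_cong sets_gibbs_prior refl)

lemma measurable_posterior_tail_majorant: "posterior_tail_majorant \<eta> t \<in> borel_measurable XS"
proof -
  interpret P: prob_space gibbs_prior by (rule prob_space_gibbs_prior)
  note [measurable] = measurable_gen_gap[folded measurable_gibbs_prior_XS]
    measurable_centered_hamiltonian[folded measurable_gibbs_prior_XS]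
  have [measurable]: "\<rho> \<in> borel_measurable gibbs_prior"
    using \<rho>_meas by (simp add: measurable_cong_sets[OF sets_gibbs_prior])
  show ?thesis
    unfolding posterior_tail_majorant_def[abs_def]
    by (intro borel_measurable_add borel_measurable_times_ennreal borel_measurable_const
        P.borel_measurable_nn_integral) (simp_all add: split_beta')
qed

lemma emeasure_posterior_tail_le:
  assumes x: "x \<in> space XS" and \<eta>: "\<eta> > 0"
  shows "emeasure (Q x) {h \<in> space Pr. \<rho> h * t < gen_gap M n h x} \<le> posterior_tail_majorant \<eta> t x"
proof -
  interpret P: prob_space gibbs_prior by (rule prob_space_gibbs_prior)
  define G where "G h = centered_hamiltonian h x" for h
  define S where "S = {h \<in> space Pr. \<rho> h * t < gen_gap M n h x}"
  have [measurable]: "G \<in> borel_measurable gibbs_prior"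
    using measurable_compose[OF measurable_Pair2'[OF x] measurable_centered_hamiltonian]
    by (simp add: G_def[abs_def] measurable_cong_sets[OF sets_gibbs_prior])
  have gap_meas: "(\<lambda>h. gen_gap M n h x) \<in> borel_measurable gibbs_prior"
    using measurable_compose[OF measurable_Pair2'[OF x] measurable_gen_gap]
    by (simp add: measurable_cong_sets[OF sets_gibbs_prior])
  have S: "S \<in> sets gibbs_prior"
    using gap_meas \<rho>_meas unfolding S_def sets_gibbs_prior
    by (measurable; simp add: measurable_cong_sets[OF sets_gibbs_prior])
  have "emeasure (Q x) S
      \<le> (\<integral>\<^sup>+h. ennreal (exp (G h) * indicator S h) \<partial>gibbs_prior) * (\<integral>\<^sup>+h. ennreal (exp (- G h)) \<partial>gibbs_prior)"
    unfolding posterior_eq_exp_tilt(2)[OF x] G_def[symmetric]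
    using posterior_eq_exp_tilt(1)[OF x, folded G_def] S
    by (intro emeasure_exp_tilted_le[OF prob_space_gibbs_prior]) simp_all
  also have "\<dots> = (\<integral>\<^sup>+h. ennreal (exp (G h) * of_bool (\<rho> h * t < gen_gap M n h x)) \<partial>gibbs_prior) *
      (\<integral>\<^sup>+h. ennreal (exp (- G h)) \<partial>gibbs_prior)"
    by (intro arg_cong2[where f="(*)"] nn_integral_cong) (auto simp: S_def sets_eq_imp_space_eq[OF sets_gibbs_prior])
  also have "\<dots> \<le> posterior_tail_majorant \<eta> t x"
    unfolding posterior_tail_majorant_def G_def[symmetric]
    using gap_meas \<rho>_meas \<eta>
    by (intro nn_integral_amgm_le[OF prob_space_gibbs_prior])
      (simp_all add: measurable_cong_sets[OF sets_gibbs_prior] exp_minus[symmetric])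
  finally show ?thesis by (simp add: S_def)
qed

lemma nn_integral_posterior_tail_majorant_le:
  assumes \<eta>: "\<eta> > 0" and t: "t \<ge> 0"
  shows "(\<integral>\<^sup>+x. posterior_tail_majorant \<eta> t x \<partial>XS)
    \<le> ennreal (exp (- real n * t\<^sup>2 / 2) / (2 * \<eta>) + \<eta> * exp (8 * real n * \<sigma>\<^sup>2) / 2)"
proof -
  interpret P: prob_space gibbs_prior by (rule prob_space_gibbs_prior)
  interpret X: prob_space XS by (rule prob_space_XS)
  note [measurable] = measurable_gen_gap[folded measurable_gibbs_prior_XS]
    measurable_centered_hamiltonian[folded measurable_gibbs_prior_XS]
  have [measurable]: "\<rho> \<in> borel_measurable gibbs_prior"
    using \<rho>_meas by (simp add: measurable_cong_sets[OF sets_gibbs_prior])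
  have space: "space gibbs_prior = space Pr" by (rule sets_eq_imp_space_eq[OF sets_gibbs_prior])
  have tail: "(\<integral>\<^sup>+x. (\<integral>\<^sup>+h. ennreal (of_bool (\<rho> h * t < gen_gap M n h x)) \<partial>gibbs_prior) \<partial>XS)
      \<le> ennreal (exp (- real n * t\<^sup>2 / 2))"
    using M n hyp_meas h_subg t
    by (intro nn_integral_nn_integral_le_of_sections[OF prob_space_gibbs_prior]
        nn_integral_gen_gap_tail_le ballI) (auto simp: space X.sigma_finite_measure split_beta')
  have mgf: "(\<integral>\<^sup>+x. (\<integral>\<^sup>+h. ennreal (exp (s * centered_hamiltonian h x)) \<partial>gibbs_prior) \<partial>XS)
      \<le> ennreal (exp (8 * real n * \<sigma>\<^sup>2))" if "s\<^sup>2 = 16" for s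
    using nn_integral_exp_centered_hamiltonian_le[of _ s] that
    by (intro nn_integral_nn_integral_le_of_sections[OF prob_space_gibbs_prior])
      (auto simp: space X.sigma_finite_measure split_beta' mult.assoc)
  have pow: "exp (g) ^ 4 = exp (4 * g)" for g :: real
    by (simp add: exp_of_nat_mult[symmetric])
  have "(\<integral>\<^sup>+x. posterior_tail_majorant \<eta> t x \<partial>XS)
      = ennreal (1 / (2 * \<eta>)) * (\<integral>\<^sup>+x. (\<integral>\<^sup>+h. ennreal (of_bool (\<rho> h * t < gen_gap M n h x)) \<partial>gibbs_prior) \<partial>XS)
      + ennreal (\<eta> / 4) * (\<integral>\<^sup>+x. (\<integral>\<^sup>+h. ennreal (exp (4 * centered_hamiltonian h x)) \<partial>gibbs_prior) \<partial>XS)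
      + ennreal (\<eta> / 4) * (\<integral>\<^sup>+x. (\<integral>\<^sup>+h. ennreal (exp ((- 4) * centered_hamiltonian h x)) \<partial>gibbs_prior) \<partial>XS)"
  proof -
    have "(\<lambda>x. \<integral>\<^sup>+h. ennreal (of_bool (\<rho> h * t < gen_gap M n h x)) \<partial>gibbs_prior) \<in> borel_measurable XS"
      "(\<lambda>x. \<integral>\<^sup>+h. ennreal (exp (s * centered_hamiltonian h x)) \<partial>gibbs_prior) \<in> borel_measurable XS" for s
      by (intro P.borel_measurable_nn_integral; simp add: split_beta')+
    then show ?thesis
      unfolding posterior_tail_majorant_def pow by (simp add: nn_integral_add nn_integral_cmult)
  qed
  also have "\<dots> \<le> ennreal (1 / (2 * \<eta>)) * ennreal (exp (- real n * t\<^sup>2 / 2))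
      + ennreal (\<eta> / 4) * ennreal (exp (8 * real n * \<sigma>\<^sup>2)) + ennreal (\<eta> / 4) * ennreal (exp (8 * real n * \<sigma>\<^sup>2))"
    using tail mgf[of 4] mgf[of "- 4"] by (intro add_mono mult_left_mono) auto
  also have "\<dots> = ennreal (exp (- real n * t\<^sup>2 / 2) / (2 * \<eta>) + \<eta> * exp (8 * real n * \<sigma>\<^sup>2) / 2)"
    using \<eta> by (simp add: ennreal_mult[symmetric] ennreal_plus[symmetric] del: ennreal_plus)
  finally show ?thesis .
qed

lemma emeasure_posterior_small_gap_ge:
  assumes x: "x \<in> space XS" and \<eta>: "\<eta> > 0"
  shows "1 - posterior_tail_majorant \<eta> t x \<le> emeasure (Q x) {h \<in> space Pr. gen_gap M n h x \<le> \<rho> h * t}"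
proof -
  have "prob_space (Q x)" and sets: "sets (Q x) = sets Pr"
    using Q_ac x unfolding abs_cont_alg_def by auto
  then interpret Qx: prob_space "Q x" by simp
  have space: "space (Q x) = space Pr" using sets by (rule sets_eq_imp_space_eq)
  have gap_meas: "(\<lambda>h. gen_gap M n h x) \<in> borel_measurable Pr"
    using measurable_compose[OF measurable_Pair2'[OF x] measurable_gen_gap] by simp
  have "{h \<in> space Pr. \<rho> h * t < gen_gap M n h x} \<in> sets (Q x)"
    unfolding sets using gap_meas \<rho>_meas by measurable
  moreover have "{h \<in> space Pr. gen_gap M n h x \<le> \<rho> h * t}
      = space (Q x) - {h \<in> space Pr. \<rho> h * t < gen_gap M n h x}"
    by (auto simp: space not_less)
  ultimately have "emeasure (Q x) {h \<in> space Pr. gen_gap M n h x \<le> \<rho> h * t}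
      = 1 - emeasure (Q x) {h \<in> space Pr. \<rho> h * t < gen_gap M n h x}"
    by (simp add: emeasure_compl Qx.emeasure_space_1)
  then show ?thesis
    using emeasure_posterior_tail_le[OF x \<eta>] by (simp add: ennreal_mono_minus)
qed

theorem posterior_gen_gap_bound:
  assumes \<delta>: "0 < \<delta>" "\<delta> < 1"
  shows "ennreal (1 - \<delta>) \<le> (\<integral>\<^sup>+x. emeasure (Q x) {h \<in> space Pr.
      gen_gap M n h x \<le> \<rho> h * (sqrt 32 * \<sigma> + sqrt (4 * ln (1 / \<delta>) / real n))} \<partial>XS)"
proof -
  define t where "t = sqrt 32 * \<sigma> + sqrt (4 * ln (1 / \<delta>) / real n)"
  define \<eta> where "\<eta> = exp (- real n * t\<^sup>2 / 4)"
  have "t \<ge> 0" using \<sigma>_pos \<delta> by (simp add: t_def)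
  have "\<eta> > 0" by (simp add: \<eta>_def)
  \<comment> \<open>The choice of \<open>\<eta>\<close> balances the tail term against the moment term.\<close>
  have "exp (- real n * t\<^sup>2 / 2) / (2 * \<eta>) = \<eta> / 2"
    by (simp add: \<eta>_def field_simps exp_add[symmetric])
  moreover have "\<eta> \<le> \<eta> * exp (8 * real n * \<sigma>\<^sup>2)" using \<open>\<eta> > 0\<close> by simp
  moreover have "\<eta> * exp (8 * real n * \<sigma>\<^sup>2) = exp (8 * real n * \<sigma>\<^sup>2 - real n * t\<^sup>2 / 4)"
    by (simp add: \<eta>_def exp_add[symmetric])
  moreover have "\<dots> \<le> \<delta>"
    unfolding t_def using \<sigma>_pos \<delta> n by (intro exp_rate_le) auto
  ultimately have "exp (- real n * t\<^sup>2 / 2) / (2 * \<eta>) + \<eta> * exp (8 * real n * \<sigma>\<^sup>2) / 2 \<le> \<delta>"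
    by linarith
  then have "(\<integral>\<^sup>+x. posterior_tail_majorant \<eta> t x \<partial>XS) \<le> ennreal \<delta>"
    using nn_integral_posterior_tail_majorant_le[OF \<open>\<eta> > 0\<close> \<open>t \<ge> 0\<close>] ennreal_leI order_trans by blast
  then show ?thesis
    unfolding t_def[symmetric]
    using emeasure_posterior_small_gap_ge[OF _ \<open>\<eta> > 0\<close>] \<delta>
    by (intro nn_integral_ge_one_minus[OF prob_space_XS measurable_posterior_tail_majorant] ballI) simp_all
qed

end

theorem theorem8:
  fixes M :: "'a measure" and Pr :: "('a \<Rightarrow> real) measure"
    and n :: nat and Q :: "(nat \<Rightarrow> 'a) \<Rightarrow> ('a \<Rightarrow> real) measure"
    and H :: "('a \<Rightarrow> real) \<Rightarrow> (nat \<Rightarrow> 'a) \<Rightarrow> real"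
    and \<rho> :: "('a \<Rightarrow> real) \<Rightarrow> real" and \<sigma> \<delta> :: real
  assumes M: "prob_space M"
    and n: "n \<ge> 1"
    and hyp_meas: "\<forall>h\<in>space Pr. h \<in> borel_measurable M \<and> (\<forall>y\<in>space M. h y \<ge> 0)"
    and eval_meas: "(\<lambda>(h, y). h y) \<in> borel_measurable (Pr \<Otimes>\<^sub>M M)"
    and Q_ac: "abs_cont_alg Pr (sample_space n M) Q"
    and Q_H: "is_hamiltonian Pr (sample_space n M) Q H"
    and expH_int: "integrable Pr (\<lambda>h. exp (\<integral>x. H h x \<partial>sample_space n M))"
    and expH_pos: "(\<integral>h. exp (\<integral>x. H h x \<partial>sample_space n M) \<partial>Pr) > 0"
    and H_int: "\<forall>h\<in>space Pr. integrable (sample_space n M) (H h)"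
    and \<rho>_meas: "\<rho> \<in> borel_measurable Pr"
    and h_int: "\<forall>h\<in>space Pr. integrable M h"
    and h_subg: "\<forall>h\<in>space Pr. \<rho> h > 0 \<and> (\<forall>l::real.
        integrable M (\<lambda>y. exp (l * (h y - (\<integral>y'. h y' \<partial>M)))) \<and>
        (\<integral>y. exp (l * (h y - (\<integral>y'. h y' \<partial>M))) \<partial>M) \<le> exp (l\<^sup>2 * (\<rho> h)\<^sup>2 / 2))"
    and \<sigma>_pos: "\<sigma> > 0"
    and H_int_k: "\<forall>h\<in>space Pr. \<forall>x\<in>space (sample_space n M). \<forall>k\<in>{0..<n}.
        integrable M (\<lambda>y. H h (x(k := y)))"
    and H_subg: "\<forall>l::real. \<forall>k\<in>{0..<n}. \<forall>h\<in>space Pr. \<forall>x\<in>space (sample_space n M).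
        integrable M (\<lambda>y. exp (l * (H h (x(k := y)) - (\<integral>y'. H h (x(k := y')) \<partial>M)))) \<and>
        (\<integral>y. exp (l * (H h (x(k := y)) - (\<integral>y'. H h (x(k := y')) \<partial>M))) \<partial>M)
          \<le> exp (l\<^sup>2 * \<sigma>\<^sup>2 / 2)"
    and \<delta>: "\<delta> > 0"
  shows "(\<integral>\<^sup>+x. emeasure (Q x) {h \<in> space Pr.
            gen_gap M n h x \<le> \<rho> h * (sqrt 32 * \<sigma> + sqrt (4 * ln (1 / \<delta>) / real n))}
          \<partial>sample_space n M) \<ge> ennreal (1 - \<delta>)"
proof (cases "\<delta> < 1")
  case True
  have "\<forall>h\<in>space Pr. h \<in> borel_measurable M" using hyp_meas by blast
  with M n interpret hamiltonian_algorithm M Pr n Q H \<rho> \<sigma>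
    using eval_meas Q_ac Q_H expH_int expH_pos H_int \<rho>_meas h_subg \<sigma>_pos H_int_k H_subg
    by (rule hamiltonian_algorithm.intro)
  show ?thesis using posterior_gen_gap_bound[OF \<delta> True] .
qed (simp add: ennreal_neg)

end
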